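(* Let $E$ be a normed space over $\mathbb{K}\in\{\mathbb{R},\mathbb{C}\}$ and let $P:E\to\mathbb{K}$ be a polynomial on $E$ (not assumed continuous), i.e. $P=P_0+P_1+\cdots+P_n$ for some $n\in\mathbb{N}$, where $P_0$ is a constant function and each $P_k$ ($1\le k\le n$) is a $k$-homogeneous polynomial. Then $P$ is continuous if and only if $P(K)$ is compact for every compact set $K\subset E$.
   Context: A map $Q:E\to\mathbb{K}$ is a $k$-homogeneous polynomial if there is a symmetric $k$-linear mapping $L:E^k\to\mathbb{K}$ (not necessarily continuous) with $Q(x)=L(x,\ldots,x)$ for all $x\in E$. *)

theory Defs
  imports "HOL-Analysis.Analysis" "HOL-Combinatorics.Permutations"
begin

text \<open>Scalar field K with scalar multiplication sc on the space.
  A k-linear map is modelled as a function on lists of length k.\<close>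

definition multilinear_map ::
  "('k::field \<Rightarrow> 'v::ab_group_add \<Rightarrow> 'v) \<Rightarrow> nat \<Rightarrow> ('v list \<Rightarrow> 'k) \<Rightarrow> bool" where
  "multilinear_map sc k L \<longleftrightarrow>
     (\<forall>xs i a b u w. length xs = k \<longrightarrow> i < k \<longrightarrow>
        L (xs[i := sc a u + sc b w]) = a * L (xs[i := u]) + b * L (xs[i := w]))"

definition symmetric_map :: "nat \<Rightarrow> ('v list \<Rightarrow> 'k) \<Rightarrow> bool" where
  "symmetric_map k L \<longleftrightarrow>
     (\<forall>xs \<pi>. length xs = k \<longrightarrow> \<pi> permutes {..<k} \<longrightarrow>
        L (map (\<lambda>i. xs ! \<pi> i) [0..<k]) = L xs)"

definition homogeneous_poly ::
  "('k::field \<Rightarrow> 'v::ab_group_add \<Rightarrow> 'v) \<Rightarrow> nat \<Rightarrow> ('v \<Rightarrow> 'k) \<Rightarrow> bool" where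
  "homogeneous_poly sc k Q \<longleftrightarrow>
     (\<exists>L. multilinear_map sc k L \<and> symmetric_map k L \<and> (\<forall>x. Q x = L (replicate k x)))"

definition polynomial_map ::
  "('k::field \<Rightarrow> 'v::ab_group_add \<Rightarrow> 'v) \<Rightarrow> ('v \<Rightarrow> 'k) \<Rightarrow> bool" where
  "polynomial_map sc P \<longleftrightarrow>
     (\<exists>n Ps. (\<exists>c. \<forall>x. Ps 0 x = c) \<and> (\<forall>k\<in>{1..n}. homogeneous_poly sc k (Ps k)) \<and>
            (\<forall>x. P x = (\<Sum>k\<le>n. Ps k x)))"

text \<open>A complex normed space structure on a real normed vector space: complex scalar
  multiplication extending the real one, with homogeneous norm.\<close>
definition complex_normed_scale :: "(complex \<Rightarrow> 'v::real_normed_vector \<Rightarrow> 'v) \<Rightarrow> bool" where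
  "complex_normed_scale sc \<longleftrightarrow>
     module sc \<and> (\<forall>r x. sc (complex_of_real r) x = r *\<^sub>R x) \<and>
     (\<forall>c x. norm (sc c x) = cmod c * norm x)"

end

theory Submission
  imports Defs "HOL-Computational_Algebra.Polynomial"
begin

text \<open>Restricted to an affine line \<open>t \<mapsto> x + t z\<close>, a polynomial of degree at most \<open>n\<close> is an
  ordinary polynomial in \<open>t\<close> of degree at most \<open>n\<close>. Given \<open>u\<^sub>m \<rightarrow> x\<close>, write
  \<open>u\<^sub>m = x + e\<^sub>m z\<^sub>m\<close> with scalars \<open>e\<^sub>m \<rightarrow> 0\<close> and vectors \<open>z\<^sub>m \<rightarrow> 0\<close>. The points \<open>x + j z\<^sub>m\<close>
  (\<open>j \<le> n\<close>, all \<open>m\<close>) together with \<open>x\<close> form a compact set, so \<open>P\<close> is bounded on them by the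
  compactness hypothesis. Lagrange interpolation at the nodes \<open>0, \<dots>, n\<close> then expresses
  \<open>P(u\<^sub>m) - P(x)\<close> as a combination of these bounded values with coefficients tending to \<open>0\<close>.\<close>

lemma multilinear_map_poly_in_slots:
  fixes sc :: "'k::field \<Rightarrow> 'v::ab_group_add \<Rightarrow> 'v"
  assumes ml: "multilinear_map sc k L" and sc_one: "\<And>u. sc 1 u = u"
  shows "finite S \<Longrightarrow> S \<subseteq> {..<k} \<Longrightarrow> length us = k \<Longrightarrow>
    \<exists>p. degree p \<le> card S \<and>
      (\<forall>t. L (map (\<lambda>i. if i \<in> S then us!i + sc t (vs!i) else us!i) [0..<k]) = poly p t)"
proof (induction S arbitrary: us rule: finite_induct)
  case empty
  have "map (\<lambda>i. us!i) [0..<k] = us" using empty map_nth by metis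
  then show ?case by (intro exI[of _ "[:L us:]"]) simp
next
  case (insert i S)
  define row where "row us' t = map (\<lambda>j. if j \<in> S then us'!j + sc t (vs!j) else us'!j) [0..<k]"
    for us' t
  have ik: "i < k" using insert by auto
  obtain p1 where p1: "degree p1 \<le> card S" "\<forall>t. L (row us t) = poly p1 t"
    using insert.IH[of us] insert.prems unfolding row_def by auto
  obtain p2 where p2: "degree p2 \<le> card S" "\<forall>t. L (row (us[i := vs!i]) t) = poly p2 t"
    using insert.IH[of "us[i := vs!i]"] insert.prems unfolding row_def by auto
  have split_slot: "map (\<lambda>j. if j \<in> insert i S then us!j + sc t (vs!j) else us!j) [0..<k]
      = (row us t)[i := sc 1 (us!i) + sc t (vs!i)]" for t
    using ik insert.prems by (intro nth_equalityI) (auto simp: row_def sc_one nth_list_update)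
  have keep_slot: "(row us t)[i := us!i] = row us t" for t
    using ik insert by (intro nth_equalityI) (auto simp: row_def nth_list_update)
  have move_slot: "(row us t)[i := vs!i] = row (us[i := vs!i]) t" for t
    using ik insert by (intro nth_equalityI) (auto simp: row_def nth_list_update)
  have len: "length (row us t) = k" for t by (simp add: row_def)
  have "L (map (\<lambda>j. if j \<in> insert i S then us!j + sc t (vs!j) else us!j) [0..<k])
     = poly (p1 + pCons 0 p2) t" for t
  proof -
    have "L ((row us t)[i := sc 1 (us!i) + sc t (vs!i)])
        = 1 * L ((row us t)[i := us!i]) + t * L ((row us t)[i := vs!i])"
      using ml ik len unfolding multilinear_map_def by blast
    then show ?thesis using p1 p2 split_slot keep_slot move_slot by simp
  qed
  moreover have "degree (p1 + pCons 0 p2) \<le> card (insert i S)"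
  proof -
    have "degree (pCons 0 p2) \<le> Suc (card S)" using p2(1) degree_pCons_le[of 0 p2] by linarith
    moreover have "card (insert i S) = Suc (card S)" using insert by simp
    ultimately show ?thesis using p1(1) degree_add_le by (metis le_SucI)
  qed
  ultimately show ?case by blast
qed

lemma homogeneous_poly_along_line:
  fixes sc :: "'k::field \<Rightarrow> 'v::ab_group_add \<Rightarrow> 'v"
  assumes "homogeneous_poly sc k Q" and sc_one: "\<And>u. sc 1 u = u"
  shows "\<exists>p. degree p \<le> k \<and> (\<forall>t. Q (x + sc t z) = poly p t)"
proof -
  obtain L where ml: "multilinear_map sc k L" and Q: "\<forall>x. Q x = L (replicate k x)"
    using assms unfolding homogeneous_poly_def by blast
  have diagonal: "map (\<lambda>i. if i \<in> {..<k} then replicate k x ! i + sc t (replicate k z ! i)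
      else replicate k x ! i) [0..<k] = replicate k (x + sc t z)" for t
    by (intro nth_equalityI) auto
  show ?thesis
    using multilinear_map_poly_in_slots[OF ml sc_one, of "{..<k}" "replicate k x" "replicate k z"]
    unfolding diagonal by (simp add: Q)
qed

lemma polynomial_map_along_line:
  fixes sc :: "'k::field \<Rightarrow> 'v::ab_group_add \<Rightarrow> 'v"
  assumes "polynomial_map sc P" and sc_one: "\<And>u. sc 1 u = u"
  shows "\<exists>n. \<forall>x z. \<exists>p. degree p \<le> n \<and> (\<forall>t. P (x + sc t z) = poly p t)"
proof -
  obtain n Ps c where const: "\<forall>x. Ps 0 x = c"
    and hom: "\<forall>k\<in>{1..n}. homogeneous_poly sc k (Ps k)" and P: "\<forall>x. P x = (\<Sum>k\<le>n. Ps k x)"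
    using assms unfolding polynomial_map_def by blast
  have "\<exists>p. degree p \<le> n \<and> (\<forall>t. P (x + sc t z) = poly p t)" for x z
  proof -
    have "\<exists>p. degree p \<le> n \<and> (\<forall>t. Ps k (x + sc t z) = poly p t)" if "k \<le> n" for k
    proof (cases "k = 0")
      case True
      then show ?thesis using const by (intro exI[of _ "[:c:]"]) auto
    next
      case False
      then have "homogeneous_poly sc k (Ps k)" using hom that by auto
      then obtain p where "degree p \<le> k" "\<forall>t. Ps k (x + sc t z) = poly p t"
        using homogeneous_poly_along_line sc_one by blast
      then show ?thesis using that by (intro exI[of _ p]) auto
    qed
    then obtain pk where pk: "\<And>k. k \<le> n \<Longrightarrow>
        degree (pk k) \<le> n \<and> (\<forall>t. Ps k (x + sc t z) = poly (pk k) t)"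
      by metis
    show ?thesis
    proof (intro exI[of _ "\<Sum>k\<le>n. pk k"] conjI allI)
      show "degree (\<Sum>k\<le>n. pk k) \<le> n" using pk by (intro degree_sum_le) auto
      show "P (x + sc t z) = poly (\<Sum>k\<le>n. pk k) t" for t using pk P by (simp add: poly_sum)
    qed
  qed
  then show ?thesis by blast
qed

definition lagrange_basis :: "nat \<Rightarrow> nat \<Rightarrow> 'k::field \<Rightarrow> 'k" where
  "lagrange_basis n j s = (\<Prod>i\<in>{..n}-{j}. (s - of_nat i) / (of_nat j - of_nat i))"

lemma lagrange_basis_at_node:
  assumes "j \<le> n" "k \<le> n"
  shows "lagrange_basis n j (of_nat k :: 'k::{field,ring_char_0}) = (if j = k then 1 else 0)"
  using assms unfolding lagrange_basis_def
  by (auto intro: prod.neutral prod_zero bexI[of _ k])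

lemma isCont_lagrange_basis:
  "isCont (lagrange_basis n j :: 'k::{real_normed_field} \<Rightarrow> 'k) s"
  unfolding lagrange_basis_def by (intro continuous_intros) auto

lemma poly_eq_lagrange_interpolation:
  fixes p :: "'k::{field,ring_char_0} poly"
  assumes "degree p \<le> n"
  shows "poly p s = (\<Sum>j\<le>n. poly p (of_nat j) * lagrange_basis n j s)"
proof -
  define q where "q = (\<Sum>j\<le>n. smult (poly p (of_nat j))
      (\<Prod>i\<in>{..n}-{j}. smult (inverse (of_nat j - of_nat i)) [:- of_nat i, 1:]))"
  have poly_q: "poly q s = (\<Sum>j\<le>n. poly p (of_nat j) * lagrange_basis n j s)" for s
    unfolding q_def lagrange_basis_def
    by (simp add: poly_sum poly_prod divide_inverse algebra_simps)
  have "degree q \<le> n"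
    unfolding q_def
  proof (intro degree_sum_le finite_atMost)
    fix j assume j: "j \<in> {..n}"
    have "degree (\<Prod>i\<in>{..n}-{j}. smult (inverse (of_nat j - of_nat i :: 'k)) [:- of_nat i, 1:])
        \<le> (\<Sum>i\<in>{..n}-{j}. degree (smult (inverse (of_nat j - of_nat i :: 'k)) [:- of_nat i, 1:]))"
      by (rule degree_prod_sum_le[of "{..n}-{j}", unfolded comp_def]) simp
    also have "\<dots> \<le> (\<Sum>i\<in>{..n}-{j}. 1)"
      by (intro sum_mono order_trans[OF degree_smult_le]) simp
    also have "\<dots> = n" using j by simp
    finally show "degree (smult (poly p (of_nat j)) (\<Prod>i\<in>{..n}-{j}.
        smult (inverse (of_nat j - of_nat i :: 'k)) [:- of_nat i, 1:])) \<le> n"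
      using degree_smult_le order_trans by blast
  qed
  moreover have "card (of_nat ` {..n} :: 'k set) = Suc n"
    by (subst card_image) (auto simp: inj_on_def)
  moreover have "poly p (of_nat k) = poly q (of_nat k)" if "k \<le> n" for k
  proof -
    have "poly q (of_nat k) = (\<Sum>j\<le>n. poly p (of_nat j) * (if j = k then 1 else 0))"
      unfolding poly_q by (rule sum.cong[OF refl]) (simp add: lagrange_basis_at_node that)
    also have "\<dots> = (\<Sum>j\<le>n. if j = k then poly p (of_nat k) else 0)"
      by (rule sum.cong[OF refl]) simp
    finally show ?thesis using that by simp
  qed
  ultimately have "p = q"
    using assms by (intro poly_eqI_degree[of "of_nat ` {..n}"]) auto
  then show ?thesis using poly_q[of s] by (simp only:)
qed

lemma poly_bounded_at_nodes_tendsto: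
  fixes p :: "nat \<Rightarrow> 'k::real_normed_field poly"
  assumes deg: "\<And>m. degree (p m) \<le> n"
    and bound: "\<And>m j. j \<le> n \<Longrightarrow> norm (poly (p m) (of_nat j)) \<le> M"
    and t: "t \<longlonglongrightarrow> 0"
  shows "(\<lambda>m. poly (p m) (t m) - poly (p m) 0) \<longlonglongrightarrow> 0"
proof (rule Lim_null_comparison)
  define \<delta> where "\<delta> m j = lagrange_basis n j (t m) - lagrange_basis n j (0::'k)" for m j
  have difference: "poly (p m) (t m) - poly (p m) 0 = (\<Sum>j\<le>n. poly (p m) (of_nat j) * \<delta> m j)" for m
    unfolding \<delta>_def poly_eq_lagrange_interpolation[OF deg, of m "t m"]
      poly_eq_lagrange_interpolation[OF deg, of m 0]
    by (simp add: sum_subtractf right_diff_distrib)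
  have "norm (poly (p m) (t m) - poly (p m) 0) \<le> (\<Sum>j\<le>n. M * norm (\<delta> m j))" for m
  proof -
    have "(\<Sum>j\<le>n. norm (poly (p m) (of_nat j) * \<delta> m j)) \<le> (\<Sum>j\<le>n. M * norm (\<delta> m j))"
      by (intro sum_mono) (simp add: norm_mult mult_right_mono bound)
    with norm_sum[of "\<lambda>j. poly (p m) (of_nat j) * \<delta> m j" "{..n}"] show ?thesis
      by (simp add: difference)
  qed
  then show "\<forall>\<^sub>F m in sequentially. norm (poly (p m) (t m) - poly (p m) 0)
      \<le> (\<Sum>j\<le>n. M * norm (\<delta> m j))"
    by simp
  have "(\<lambda>m. \<delta> m j) \<longlonglongrightarrow> 0" for j
    unfolding \<delta>_def using isCont_tendsto_compose[OF isCont_lagrange_basis t]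
    by (rule LIM_zero)
  then show "(\<lambda>m. \<Sum>j\<le>n. M * norm (\<delta> m j)) \<longlonglongrightarrow> 0"
    by (auto intro!: tendsto_null_sum tendsto_mult_right_zero tendsto_norm_zero)
qed

text \<open>Taking \<open>e = \<surd>\<parallel>w\<parallel>\<close> makes both factors tend to \<open>0\<close>.\<close>

lemma tendsto_zero_scaleR_decomposition:
  fixes w :: "nat \<Rightarrow> 'v::real_normed_vector"
  assumes "w \<longlonglongrightarrow> 0"
  obtains e :: "nat \<Rightarrow> real" and z where "e \<longlonglongrightarrow> 0" "z \<longlonglongrightarrow> 0" "\<And>m. w m = e m *\<^sub>R z m"
proof
  define e where "e m = sqrt (norm (w m))" for m
  show "e \<longlonglongrightarrow> 0"
    unfolding e_def using tendsto_real_sqrt[OF tendsto_norm_zero[OF assms]] by simp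
  have norm_eq: "norm (inverse (e m) *\<^sub>R w m) = e m" for m
  proof -
    have "norm (inverse (e m) *\<^sub>R w m) = norm (w m) / sqrt (norm (w m))"
      by (simp add: e_def field_split_simps)
    also have "\<dots> = e m"
      unfolding e_def by (rule real_div_sqrt) simp
    finally show ?thesis .
  qed
  have "(\<lambda>m. norm (inverse (e m) *\<^sub>R w m)) \<longlonglongrightarrow> 0"
    unfolding norm_eq by (fact \<open>e \<longlonglongrightarrow> 0\<close>)
  then show "(\<lambda>m. inverse (e m) *\<^sub>R w m) \<longlonglongrightarrow> 0"
    by (rule tendsto_norm_zero_cancel)
  show "w m = e m *\<^sub>R (inverse (e m) *\<^sub>R w m)" for m
    by (cases "w m = 0") (simp_all add: e_def)
qed

lemma compact_insert_limit_range:
  fixes f :: "nat \<Rightarrow> 'a::topological_space"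
  assumes "f \<longlonglongrightarrow> l"
  shows "compact (insert l (range f))"
  using compactin_sequence_with_limit[of euclidean f l "range f"] assms by simp

lemma polynomial_map_continuous_iff_compact_images:
  fixes sc :: "'k::real_normed_field \<Rightarrow> 'v::real_normed_vector \<Rightarrow> 'v" and P :: "'v \<Rightarrow> 'k"
  assumes sc_of_real: "\<And>r u. sc (of_real r) u = r *\<^sub>R u"
    and norm_sc: "\<And>c u. norm (sc c u) = norm c * norm u"
    and P: "polynomial_map sc P"
  shows "continuous_on UNIV P \<longleftrightarrow> (\<forall>K. compact K \<longrightarrow> compact (P ` K))"
proof (intro iffI allI impI)
  show "continuous_on UNIV P \<Longrightarrow> compact K \<Longrightarrow> compact (P ` K)" for K
    using compact_continuous_image continuous_on_subset by blast
next
  assume compact_images: "\<forall>K. compact K \<longrightarrow> compact (P ` K)"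
  have sc_zero: "sc 0 u = 0" and sc_one: "sc 1 u = u" for u
    using sc_of_real[of 0 u] sc_of_real[of 1 u] by simp_all
  obtain n where along_line: "\<And>x z. \<exists>p. degree p \<le> n \<and> (\<forall>t. P (x + sc t z) = poly p t)"
    using polynomial_map_along_line[OF P sc_one] by blast
  show "continuous_on UNIV P"
  proof (rule continuous_at_imp_continuous_on, intro ballI continuous_at_sequentiallyI)
    fix x :: 'v and u assume "u \<longlonglongrightarrow> x"
    then obtain e z where e: "e \<longlonglongrightarrow> 0" and z: "z \<longlonglongrightarrow> 0" and u: "\<And>m. u m - x = e m *\<^sub>R z m"
      using tendsto_zero_scaleR_decomposition[of "\<lambda>m. u m - x"] by (metis LIM_zero)
    have "\<forall>m. \<exists>q. degree q \<le> n \<and> (\<forall>t. P (x + sc t (z m)) = poly q t)"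
      using along_line by blast
    then obtain p where deg: "\<And>m. degree (p m) \<le> n"
      and p: "\<And>m t. P (x + sc t (z m)) = poly (p m) t"
      by metis
    define K where "K = (\<Union>j\<le>n. insert x (range (\<lambda>m. x + sc (of_nat j) (z m))))"
    have "(\<lambda>m. sc (of_nat j) (z m)) \<longlonglongrightarrow> 0" for j
      by (rule tendsto_norm_zero_cancel)
        (simp add: norm_sc tendsto_mult_right_zero tendsto_norm_zero z del: norm_of_nat)
    then have "(\<lambda>m. x + sc (of_nat j) (z m)) \<longlonglongrightarrow> x" for j
      using tendsto_add[OF tendsto_const[of x]] by fastforce
    then have "compact K"
      unfolding K_def by (intro compact_UN finite_atMost compact_insert_limit_range)
    then obtain M where M: "\<And>y. y \<in> P ` K \<Longrightarrow> norm y \<le> M"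
      using compact_images compact_imp_bounded bounded_iff by metis
    have "norm (poly (p m) (of_nat j)) \<le> M" if "j \<le> n" for j m
    proof -
      have "x + sc (of_nat j) (z m) \<in> K" unfolding K_def using that by blast
      then show ?thesis using M p by (metis image_eqI)
    qed
    moreover have "(\<lambda>m. of_real (e m) :: 'k) \<longlonglongrightarrow> 0"
      using tendsto_of_real[OF e] by simp
    ultimately have "(\<lambda>m. poly (p m) (of_real (e m)) - poly (p m) 0) \<longlonglongrightarrow> 0"
      by (rule poly_bounded_at_nodes_tendsto[OF deg])
    moreover have "P (u m) - P x = poly (p m) (of_real (e m)) - poly (p m) 0" for m
    proof -
      have "u m = x + sc (of_real (e m)) (z m)" using u[of m] by (simp add: sc_of_real algebra_simps)
      then show ?thesis
        using p[where m = m and t = "of_real (e m)"] p[where m = m and t = 0] by (simp add: sc_zero)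
    qed
    ultimately have "(\<lambda>m. P (u m) - P x) \<longlonglongrightarrow> 0" by simp
    then show "(\<lambda>m. P (u m)) \<longlonglongrightarrow> P x" by (simp add: LIM_zero_iff)
  qed
qed

theorem theorem2p1:
  shows "(\<forall>P :: 'a::real_normed_vector \<Rightarrow> real. polynomial_map scaleR P \<longrightarrow>
            (continuous_on UNIV P \<longleftrightarrow> (\<forall>K. compact K \<longrightarrow> compact (P ` K)))) \<and>
         (\<forall>(sc :: complex \<Rightarrow> 'b::real_normed_vector \<Rightarrow> 'b) (P :: 'b \<Rightarrow> complex).
            complex_normed_scale sc \<longrightarrow> polynomial_map sc P \<longrightarrow>
            (continuous_on UNIV P \<longleftrightarrow> (\<forall>K. compact K \<longrightarrow> compact (P ` K))))"
proof (intro conjI allI impI)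
  show "continuous_on UNIV P \<longleftrightarrow> (\<forall>K. compact K \<longrightarrow> compact (P ` K))"
    if "polynomial_map scaleR P" for P :: "'a \<Rightarrow> real"
    using that by (intro polynomial_map_continuous_iff_compact_images) auto
  show "continuous_on UNIV P \<longleftrightarrow> (\<forall>K. compact K \<longrightarrow> compact (P ` K))"
    if "complex_normed_scale sc" "polynomial_map sc P"
    for sc :: "complex \<Rightarrow> 'b \<Rightarrow> 'b" and P :: "'b \<Rightarrow> complex"
    using that unfolding complex_normed_scale_def
    by (intro polynomial_map_continuous_iff_compact_images) auto
qed

end
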